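(* Consider the $2\times2$ TAHO scheme defined in the context, with $a=F'(0)>0$ and $\lambda\ge\|F'\|_\infty$, and let $m_1=\min_uM_1'(u)>0$, $m_2=\min_uM_2'(u)>0$ (minima over the range of $u$ under consideration). Suppose $$\Delta t\le\min\Big(\frac{1-\lambda\rho}{1+\gamma_1},\frac{1-\lambda\rho}{1-\gamma_2}\Big),$$ and, if $\lambda>2a$, $$\Delta x\le\frac{a^2}{\lambda+a},\qquad \rho\le\min\Big(\frac1\lambda,\ \frac{2\lambda^2m_1}{2a^2\lambda m_1+a_+a_-^2},\ \frac{2\lambda^2m_2}{2a^2\lambda m_2+a_+^2a_-}\Big),$$ while if $a<\lambda<2a$, the same conditions together with $\rho\ge\frac{|\lambda-2a|}{a^2-\Delta x\,a_-}$. Then the scheme satisfies the monotonicity conditions: for $i=1,2$ and all $u$ in the range under consideration, $(\mathcal{B}^i_l)'(u)\ge0$ for $l=-1,0,1$; $1-\rho q+\Delta t\big((\mathcal{B}^i_0)'(u)-\beta^i_0\big)\ge0$; $\frac{\rho(\lambda_i+q)}{2}+\Delta t\big((\mathcal{B}^i_{-1})'(u)-\beta^i_{-1}\big)\ge0$; $\frac{\rho(q-\lambda_i)}{2}+\Delta t\big((\mathcal{B}^i_1)'(u)-\beta^i_1\big)\ge0$.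
   Context: Jin–Xin system: $\partial_tf^i+\lambda_i\partial_xf^i=M_i(u)-f^i$, $i=1,2$, scalar unknowns ($k=1$), $\lambda_1=-\lambda$, $\lambda_2=\lambda$, $\lambda>0$, $u=f^1+f^2$, with $F(u)=\lambda(M_2(u)-M_1(u))$ smooth, $F(0)=0$, $M_1+M_2=\mathrm{id}$; equivalently $u_t+v_x=0$, $v_t+\lambda^2u_x=F(u)-v$ with $v=\lambda(f^2-f^1)$. Set $a=F'(0)$, $a_\pm=\lambda\pm a$, $\rho=\Delta t/\Delta x$, $q=\lambda$. The $2\times2$ TAHO scheme is $$\frac{f^i_{j,n+1}-f^i_{j,n}}{\Delta t}+\frac{\lambda_i}{2\Delta x}(f^i_{j+1,n}-f^i_{j-1,n})-\frac{q}{2\Delta x}(f^i_{j+1,n}-2f^i_{j,n}+f^i_{j-1,n})=\sum_{l=-1,0,1}\big(\mathcal{B}^i_l(u_{j+l,n})-\beta^i_lf^i_{j+l,n}\big),$$ with scalar $\beta^i_l$ and functions $\mathcal{B}^i_l$ determined by: $\beta^i_{-1}+\beta^i_0+\beta^i_1=1-\frac{\rho}{2}\Delta x$; $\mathcal{B}^i_{-1}+\mathcal{B}^i_0+\mathcal{B}^i_1=M_i(u)(1-\frac{\rho}{2}\Delta x)$; $\beta^i_1-\beta^i_{-1}=\gamma_i$ and $\mathcal{B}^i_1-\mathcal{B}^i_{-1}=\Gamma_i$, where $\gamma_1=\frac{q}{2a_+}+\frac{a\rho}{2a_+}(2\lambda+a)$, $\gamma_2=-\frac{q}{2a_-}+\frac{a\rho}{2a_-}(2\lambda-a)$,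 $\Gamma_1(u)=\frac{q-a^2\rho}{2a_+}M_1(u)-\frac{a_-^2}{4\lambda}\rho u$, $\Gamma_2(u)=-\frac{q-a^2\rho}{2a_-}M_2(u)+\frac{a_+^2}{4\lambda}\rho u$; and finally $\beta^1_0=1-\gamma_1-\frac{\rho}{2}\Delta x$, $\beta^2_0=1+\gamma_2-\frac{\rho}{2}\Delta x$, and $\mathcal{B}^i_0$ is chosen with $(\mathcal{B}^i_0)'(u)=M_i'(u)-|\Gamma_i'(u)|-\frac{\rho}{2}\Delta x\,M_i'(u)$ for $i=1,2$. *)

theory Defs
  imports "HOL-Analysis.Analysis"
begin

text \<open>2x2 TAHO scheme for the Jin--Xin system, with q = lambda.
  Parameters: lam = lambda, a = F'(0), rho = dt/dx. Index i ranges over {1,2}.\<close>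

definition taho_lam :: "real \<Rightarrow> nat \<Rightarrow> real" where
  "taho_lam lam i = (if i = 1 then - lam else lam)"

definition taho_gamma :: "real \<Rightarrow> real \<Rightarrow> real \<Rightarrow> nat \<Rightarrow> real" where
  "taho_gamma lam a rho i =
     (if i = 1 then lam / (2 * (lam + a)) + a * rho / (2 * (lam + a)) * (2 * lam + a)
      else - lam / (2 * (lam - a)) + a * rho / (2 * (lam - a)) * (2 * lam - a))"

definition taho_Gamma :: "real \<Rightarrow> real \<Rightarrow> real \<Rightarrow> (nat \<Rightarrow> real \<Rightarrow> real) \<Rightarrow> nat \<Rightarrow> real \<Rightarrow> real" where
  "taho_Gamma lam a rho M i u =
     (if i = 1 then (lam - a^2 * rho) / (2 * (lam + a)) * M 1 u - (lam - a)^2 / (4 * lam) * rho * u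
      else - (lam - a^2 * rho) / (2 * (lam - a)) * M 2 u + (lam + a)^2 / (4 * lam) * rho * u)"

end

theory Submission
  imports Defs
begin

(* The coefficients B_l^i are tied together by three relations: their sum is
   (1 - c) M_i with c = rho dx / 2, the outer difference B_1^i - B_{-1}^i is
   Gamma_i, and B_0^i has slope (1 - c) M_i' - |Gamma_i'|.  Since Gamma_i is an
   affine combination kappa_i M_i + sigma_i u, these relations force the outer
   slopes to be the positive and negative parts of g = kappa_i M_i' + sigma_i,
   so they are nonnegative; the central slope is nonnegative because the
   step-size restrictions give |kappa_i d + sigma_i| <= (1 - c) d for every
   d >= m_i.  The weights beta_l^i are determined by the scheme as well, and
   the restrictions on dt and dx make the upwind diffusion rho (lam +- lam_i)/2
   dominate dt beta_{+-1}^i and 1 - rho lam dominate dt beta_0^i. *)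

lemma mesh_le_a:
  fixes lam a dx :: real
  assumes "0 < a" "a < lam" "dx \<le> a^2 / (lam + a)"
  shows "dx \<le> a"
proof -
  have "a^2 / (lam + a) \<le> a * (lam + a) / (lam + a)"
    using assms by (intro divide_right_mono) (auto simp: power2_eq_square)
  then show ?thesis using assms by simp
qed

(* In both regimes the numerical diffusion rho dx (lam - a) is compensated by
   the relaxation term; this is what makes the central slope of the second
   family nonnegative, and it also bounds dx by lam - a. *)
lemma diffusion_coupling:
  fixes lam a rho dx :: real
  assumes "0 < a" "a < lam" "0 < rho" "rho * lam \<le> 1" "0 < dx" "dx \<le> a^2 / (lam + a)"
    and regime: "2 * a < lam \<or> (lam < 2 * a \<and> \<bar>lam - 2 * a\<bar> / (a^2 - dx * (lam - a)) \<le> rho)"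
  shows "2*a - lam - a^2*rho + rho*dx*(lam - a) \<le> 0" and "dx \<le> lam - a"
proof -
  have mesh: "dx * (lam + a) \<le> a^2" using assms by (simp add: pos_le_divide_eq)
  have "dx * (lam - a) < dx * (lam + a)" using assms by simp
  then have diff_pos: "0 < a^2 - dx * (lam - a)" using mesh by linarith
  have "2*a - lam - a^2*rho + rho*dx*(lam - a) \<le> 0 \<and> dx \<le> lam - a"
  proof (cases "2 * a < lam")
    case True
    have "rho * (dx * (lam - a)) \<le> rho * a^2"
      using diff_pos \<open>0 < rho\<close> by (intro mult_left_mono) auto
    moreover have "dx \<le> lam - a" using mesh_le_a[OF assms(1,2,6)] True by linarith
    ultimately show ?thesis using True by (simp add: algebra_simps)
  next
    case False
    then have lt: "lam < 2 * a" and slow: "\<bar>lam - 2 * a\<bar> / (a^2 - dx * (lam - a)) \<le> rho"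
      using regime by auto
    have "2 * a - lam \<le> rho * (a^2 - dx * (lam - a))"
      using slow lt diff_pos by (simp add: divide_le_eq)
    then have coupling: "2*a - lam - a^2*rho + rho*dx*(lam - a) \<le> 0"
      by (simp add: algebra_simps)
    have "(1 - rho * lam) * (lam - 2*a) \<le> 0" using assms lt by (intro mult_nonneg_nonpos) auto
    then have "rho * (dx * (lam - a)) \<le> rho * ((lam - a) * (lam - a))"
      using coupling by (simp add: algebra_simps power2_eq_square)
    then have "dx * (lam - a) \<le> (lam - a) * (lam - a)" using \<open>0 < rho\<close> by simp
    then have "dx \<le> lam - a" using assms by simp
    with coupling show ?thesis by simp
  qed
  then show "2*a - lam - a^2*rho + rho*dx*(lam - a) \<le> 0" and "dx \<le> lam - a" by auto
qed

lemma step_restrictions_consequences: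
  fixes lam a dx rho m1 m2 :: real
  assumes "0 < lam" "0 < a" "0 < rho" "0 < dx" "0 < m1" "0 < m2"
    and regime:
      "(lam > 2 * a \<and>
          dx \<le> a^2 / (lam + a) \<and>
          rho \<le> min (1 / lam)
                 (min (2 * lam^2 * m1 / (2 * a^2 * lam * m1 + (lam + a) * (lam - a)^2))
                      (2 * lam^2 * m2 / (2 * a^2 * lam * m2 + (lam + a)^2 * (lam - a)))))
       \<or> (a < lam \<and> lam < 2 * a \<and>
          dx \<le> a^2 / (lam + a) \<and>
          rho \<le> min (1 / lam)
                 (min (2 * lam^2 * m1 / (2 * a^2 * lam * m1 + (lam + a) * (lam - a)^2))
                      (2 * lam^2 * m2 / (2 * a^2 * lam * m2 + (lam + a)^2 * (lam - a)))) \<and>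
          rho \<ge> \<bar>lam - 2 * a\<bar> / (a^2 - dx * (lam - a)))"
  shows "a < lam" and "rho * lam \<le> 1"
    and "rho * (2*a^2*lam*m1 + (lam+a)*(lam-a)^2) \<le> 2*lam^2*m1"
    and "rho * (2*a^2*lam*m2 + (lam+a)^2*(lam-a)) \<le> 2*lam^2*m2"
    and "2*a - lam - a^2*rho + rho*dx*(lam - a) \<le> 0"
    and "dx \<le> lam - a" and "dx \<le> a"
proof -
  have common: "a < lam" "dx \<le> a^2 / (lam + a)" "rho \<le> 1 / lam"
    "rho \<le> 2 * lam^2 * m1 / (2 * a^2 * lam * m1 + (lam + a) * (lam - a)^2)"
    "rho \<le> 2 * lam^2 * m2 / (2 * a^2 * lam * m2 + (lam + a)^2 * (lam - a))"
    using regime assms(2) by auto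
  show "a < lam" by (fact common(1))
  show rl: "rho * lam \<le> 1" using common(3) assms by (simp add: field_simps)
  have "0 < 2 * a^2 * lam * m1 + (lam + a) * (lam - a)^2"
    "0 < 2 * a^2 * lam * m2 + (lam + a)^2 * (lam - a)"
    using common(1) assms by (intro add_pos_pos mult_pos_pos; simp)+
  then show "rho * (2*a^2*lam*m1 + (lam+a)*(lam-a)^2) \<le> 2*lam^2*m1"
    and "rho * (2*a^2*lam*m2 + (lam+a)^2*(lam-a)) \<le> 2*lam^2*m2"
    using common(4,5) by (simp_all add: pos_le_divide_eq)
  have "2 * a < lam \<or> (lam < 2 * a \<and> \<bar>lam - 2 * a\<bar> / (a^2 - dx * (lam - a)) \<le> rho)"
    using regime by auto
  note coupling = diffusion_coupling[OF assms(2) common(1) assms(3) rl assms(4) common(2) this]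
  show "2*a - lam - a^2*rho + rho*dx*(lam - a) \<le> 0" and "dx \<le> lam - a"
    by (fact coupling(1), fact coupling(2))
  show "dx \<le> a" using mesh_le_a[OF assms(2) common(1,2)] .
qed

(* gamma_1 is positive; it is the only off-centre relaxation weight beta_1^1. *)
lemma gamma1_pos:
  fixes lam a rho :: real
  assumes "0 < lam" "0 < a" "0 \<le> rho"
  shows "0 < taho_gamma lam a rho 1"
  unfolding taho_gamma_def using assms
  by (simp add: add_pos_nonneg divide_nonneg_pos)

(* The weight dt beta_1^1 = rho dx gamma_1 is dominated by rho lam. *)
lemma dx_gamma1_le:
  fixes lam a rho dx :: real
  assumes "0 < a" "a < lam" "0 < rho" "rho * lam \<le> 1" "0 < dx" "dx \<le> a"
  shows "dx * taho_gamma lam a rho 1 \<le> lam"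
proof -
  have "a * rho \<le> lam * rho" using assms by (intro mult_right_mono) auto
  also have "\<dots> \<le> 1" using assms(4) by (simp add: mult.commute)
  finally have "a * rho \<le> 1" .
  then have "dx * (a * rho * (2*lam + a)) \<le> dx * (2*lam + a)"
    using assms by (simp add: mult_left_le)
  also have "\<dots> \<le> a * (2*lam + a)" using assms by (intro mult_right_mono) auto
  also have "\<dots> \<le> lam * lam + 2*lam*a"
    using mult_strict_mono[of a lam a lam] assms by (simp add: algebra_simps)
  finally have "dx * (a * rho * (2*lam + a)) \<le> lam * lam + 2*lam*a" .
  moreover have "dx * lam \<le> lam * lam" using assms by (intro mult_right_mono) auto
  ultimately have "dx * (lam + a * rho * (2*lam + a)) \<le> 2*lam*(lam + a)"
    by (simp add: algebra_simps)
  then have "dx * ((lam + a * rho * (2*lam + a)) / (2*(lam + a))) \<le> lam"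
    using assms by (simp add: divide_simps mult.commute mult.left_commute)
  then show ?thesis unfolding taho_gamma_def by (simp add: add_divide_distrib)
qed

(* gamma_2 is nonpositive; -gamma_2 is the only off-centre weight beta_{-1}^2. *)
lemma gamma2_nonpos:
  fixes lam a rho :: real
  assumes "0 < a" "a < lam" "0 \<le> rho" "rho * lam \<le> 1"
  shows "taho_gamma lam a rho 2 \<le> 0"
proof -
  have "a * rho * (2*lam - a) * lam = a * (2*lam - a) * (rho * lam)" by (simp add: algebra_simps)
  also have "\<dots> \<le> a * (2*lam - a)" using assms by (simp add: mult_left_le)
  also have "\<dots> \<le> lam * lam" using zero_le_power2[of "lam - a"] by (simp add: power2_eq_square algebra_simps)
  finally have "a * rho * (2*lam - a) \<le> lam" using assms by simp
  then show ?thesis unfolding taho_gamma_def using assms by (simp add: divide_simps)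
qed

(* The weight dt beta_{-1}^2 = - rho dx gamma_2 is dominated by rho lam / 2. *)
lemma dx_gamma2_ge:
  fixes lam a rho dx :: real
  assumes "0 < a" "a < lam" "0 \<le> rho" "0 < dx" "dx \<le> lam - a"
  shows "- lam / 2 \<le> dx * taho_gamma lam a rho 2"
proof -
  have "- lam / (2 * (lam - a)) \<le> taho_gamma lam a rho 2"
    unfolding taho_gamma_def using assms by simp
  then have "dx * (- lam / (2 * (lam - a))) \<le> dx * taho_gamma lam a rho 2"
    using assms by (intro mult_left_mono) auto
  moreover have "- lam / 2 \<le> dx * (- lam / (2 * (lam - a)))"
    using assms by (simp add: divide_simps)
  ultimately show ?thesis by linarith
qed

lemma time_step_le_one:
  fixes lam a rho dt :: real
  assumes "0 < lam" "0 < a" "0 < rho" "0 < dt"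
    and dt_le: "dt \<le> min ((1 - lam * rho) / (1 + taho_gamma lam a rho 1))
                          ((1 - lam * rho) / (1 - taho_gamma lam a rho 2))"
  shows "dt \<le> 1"
proof -
  have gamma1: "0 < taho_gamma lam a rho 1" using gamma1_pos assms by simp
  then have "dt * (1 + taho_gamma lam a rho 1) \<le> 1 - lam * rho"
    using dt_le by (simp add: pos_le_divide_eq)
  moreover have "dt \<le> dt * (1 + taho_gamma lam a rho 1)" using gamma1 assms by simp
  moreover have "0 \<le> lam * rho" using assms by simp
  ultimately show ?thesis by linarith
qed

lemma relaxation_weights_bounded:
  fixes beta :: "int \<Rightarrow> real" and lam a rho dx dt :: real
  assumes i: "i \<in> {1, 2}" and "0 < lam" "0 < a" "a < lam" "0 < rho" "rho * lam \<le> 1"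
    and "0 < dx" "dx \<le> a" "dx \<le> lam - a" and dt: "dt = rho * dx"
    and sum: "beta (-1) + beta 0 + beta 1 = 1 - rho / 2 * dx"
    and diff: "beta 1 - beta (-1) = taho_gamma lam a rho i"
    and centre: "beta 0 = (if i = 1 then 1 - taho_gamma lam a rho 1 else 1 + taho_gamma lam a rho 2)
                          - rho / 2 * dx"
    and dt_le: "dt \<le> min ((1 - lam * rho) / (1 + taho_gamma lam a rho 1))
                          ((1 - lam * rho) / (1 - taho_gamma lam a rho 2))"
  shows "dt * beta 0 \<le> 1 - rho * lam"
    and "dt * beta (-1) \<le> rho * (taho_lam lam i + lam) / 2"
    and "dt * beta 1 \<le> rho * (lam - taho_lam lam i) / 2"
proof -
  define g1 where "g1 = taho_gamma lam a rho 1"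
  define g2 where "g2 = taho_gamma lam a rho 2"
  have g1: "0 < g1" "dx * g1 \<le> lam"
    unfolding g1_def using gamma1_pos[of lam a rho] dx_gamma1_le[of a lam rho dx] assms(2-9)
    by simp_all
  have g2: "g2 \<le> 0" "- lam / 2 \<le> dx * g2"
    unfolding g2_def using gamma2_nonpos[of a lam rho] dx_gamma2_ge[of a lam rho dx] assms(2-9)
    by simp_all
  have dt1: "dt * (1 + g1) \<le> 1 - rho * lam" and dt2: "dt * (1 - g2) \<le> 1 - rho * lam"
    using dt_le g1(1) g2(1) unfolding g1_def g2_def by (simp_all add: pos_le_divide_eq mult.commute)
  have "0 \<le> rho / 2 * dx" "0 \<le> dt" using assms by simp_all
  consider "i = 1" | "i = 2" using i by auto
  then have "dt * beta 0 \<le> 1 - rho * lam \<and> dt * beta (-1) \<le> rho * (taho_lam lam i + lam) / 2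
      \<and> dt * beta 1 \<le> rho * (lam - taho_lam lam i) / 2"
  proof cases
    case 1
    then have weights: "beta (-1) = 0" "beta 1 = g1" "beta 0 \<le> 1 + g1"
      using sum diff centre g1 \<open>0 \<le> rho / 2 * dx\<close> unfolding g1_def by auto
    have "dt * beta 0 \<le> dt * (1 + g1)" using weights \<open>0 \<le> dt\<close> by (intro mult_left_mono)
    moreover have "dt * beta 1 \<le> rho * lam"
      using weights g1(2) dt \<open>0 < rho\<close> by (simp add: mult.assoc)
    ultimately show ?thesis using 1 dt1 weights by (simp add: taho_lam_def)
  next
    case 2
    then have weights: "beta (-1) = - g2" "beta 1 = 0" "beta 0 \<le> 1 - g2"
      using sum diff centre g2 \<open>0 \<le> rho / 2 * dx\<close> unfolding g2_def by auto
    have "dt * beta 0 \<le> dt * (1 - g2)" using weights \<open>0 \<le> dt\<close> by (intro mult_left_mono)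
    moreover have "dt * beta (-1) \<le> rho * (lam / 2)"
    proof -
      have "rho * (- lam / 2) \<le> rho * (dx * g2)" using g2(2) \<open>0 < rho\<close> by (intro mult_left_mono) auto
      then show ?thesis using weights dt by (simp add: mult.assoc)
    qed
    moreover have "0 < rho * lam" using assms by simp
    ultimately show ?thesis using 2 dt2 weights by (simp add: taho_lam_def)
  qed
  then show "dt * beta 0 \<le> 1 - rho * lam"
    and "dt * beta (-1) \<le> rho * (taho_lam lam i + lam) / 2"
    and "dt * beta 1 \<le> rho * (lam - taho_lam lam i) / 2" by auto
qed

lemma abs_weighted_difference_le:
  fixes alpha beta k m d :: real
  assumes "0 \<le> alpha" "alpha \<le> k" "0 \<le> beta" "beta \<le> alpha * m" "0 \<le> m" "m \<le> d"
  shows "\<bar>alpha * d - beta\<bar> \<le> k * d"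
proof -
  have "alpha * m \<le> alpha * d" using assms by (intro mult_left_mono) auto
  moreover have "alpha * d \<le> k * d" using assms by (intro mult_right_mono) auto
  moreover have "0 \<le> k * d" using assms by simp
  ultimately show ?thesis using assms by (simp add: abs_le_iff)
qed

(* The CFL-type condition on rho, read as: the drift part t^2 rho/(4 lam) of
   Gamma_i' is at most its M_i'-part at the smallest slope m. *)
lemma drift_below_slope:
  fixes lam a rho m s t :: real
  assumes "0 < lam" "0 < s"
    and cfl: "rho * (2*a^2*lam*m + s * t^2) \<le> 2*lam^2*m"
  shows "t^2 / (4*lam) * rho \<le> (lam - a^2*rho) / (2 * s) * m"
proof -
  have "4 * lam * s * ((lam - a^2*rho) / (2 * s) * m - t^2 / (4*lam) * rho)
        = 2*lam^2*m - rho * (2*a^2*lam*m + s * t^2)"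
    using assms(1,2) by (simp add: field_simps power2_eq_square)
  also have "\<dots> \<ge> 0" using cfl by simp
  finally have "0 \<le> 4 * lam * s * ((lam - a^2*rho) / (2 * s) * m - t^2 / (4*lam) * rho)" .
  moreover have "0 < 4 * lam * s" using assms by simp
  ultimately show ?thesis by (simp add: zero_le_mult_iff)
qed

lemma relaxed_speed_below_lam:
  fixes lam a rho :: real
  assumes "0 < a" "a < lam" "0 < rho" "rho * lam \<le> 1"
  shows "a^2 * rho < lam"
proof -
  have "a^2 * rho < lam^2 * rho" using assms by (intro mult_strict_right_mono power_strict_mono) auto
  also have "\<dots> = lam * (rho * lam)" by (simp add: power2_eq_square)
  also have "\<dots> \<le> lam" using assms by (simp add: mult_left_le)
  finally show ?thesis .
qed

(* Gamma_i is affine in (M_i(u), u): Gamma_i(u) = kappa_i M_i(u) + sigma_i u. *)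
definition taho_kappa :: "real \<Rightarrow> real \<Rightarrow> real \<Rightarrow> nat \<Rightarrow> real" where
  "taho_kappa lam a rho i =
     (if i = 1 then (lam - a^2 * rho) / (2 * (lam + a)) else - (lam - a^2 * rho) / (2 * (lam - a)))"

definition taho_sigma :: "real \<Rightarrow> real \<Rightarrow> real \<Rightarrow> nat \<Rightarrow> real" where
  "taho_sigma lam a rho i =
     (if i = 1 then - ((lam - a)^2 / (4 * lam) * rho) else (lam + a)^2 / (4 * lam) * rho)"

lemma taho_Gamma_affine:
  "taho_Gamma lam a rho M i = (\<lambda>u. taho_kappa lam a rho i * M i u + taho_sigma lam a rho i * u)"
  if "i \<in> {1, 2}"
  using that by (auto simp: fun_eq_iff taho_Gamma_def taho_kappa_def taho_sigma_def)

lemma taho_Gamma_has_derivative: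
  assumes "i \<in> {1, 2}" "(M i has_real_derivative D) (at u)"
  shows "(taho_Gamma lam a rho M i has_real_derivative
            taho_kappa lam a rho i * D + taho_sigma lam a rho i) (at u)"
  unfolding taho_Gamma_affine[OF assms(1)] by (auto intro!: derivative_eq_intros assms(2))

lemma Gamma1_slope_bound:
  fixes lam a rho m d c :: real
  assumes "0 < a" "a < lam" "0 < rho" "rho * lam \<le> 1" "0 < m" "m \<le> d" "c \<le> 1/2"
    and cfl: "rho * (2*a^2*lam*m + (lam+a)*(lam-a)^2) \<le> 2*lam^2*m"
  shows "\<bar>taho_kappa lam a rho 1 * d + taho_sigma lam a rho 1\<bar> \<le> (1 - c) * d"
proof -
  define alpha where "alpha = (lam - a^2*rho) / (2*(lam+a))"
  define beta where "beta = (lam-a)^2 / (4*lam) * rho"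
  have "0 \<le> alpha" unfolding alpha_def
    using relaxed_speed_below_lam[OF assms(1-4)] assms by (intro divide_nonneg_pos) auto
  moreover have "alpha \<le> 1 - c"
  proof -
    have "0 \<le> a^2 * rho" using assms by simp
    then have "lam - a^2*rho \<le> lam + a" using assms by linarith
    then have "alpha \<le> (lam + a) / (2*(lam+a))"
      unfolding alpha_def using assms by (intro divide_right_mono) auto
    also have "\<dots> = 1/2" using assms by simp
    finally show ?thesis using assms by linarith
  qed
  moreover have "beta \<le> alpha * m"
    unfolding alpha_def beta_def using assms by (intro drift_below_slope) auto
  moreover have "0 \<le> beta" unfolding beta_def using assms by simp
  ultimately have "\<bar>alpha * d - beta\<bar> \<le> (1 - c) * d"
    using assms by (intro abs_weighted_difference_le) auto
  then show ?thesis unfolding alpha_def beta_def taho_kappa_def taho_sigma_def by simp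
qed

(* The slope of Gamma_2 is dominated by (1 - c) M_2'; here kappa_2 <= 0, and
   the bound -kappa_2 <= 1 - c is exactly the diffusion coupling condition. *)
lemma Gamma2_slope_bound:
  fixes lam a rho m d c :: real
  assumes "0 < a" "a < lam" "0 < rho" "rho * lam \<le> 1" "0 < m" "m \<le> d"
    and coupling: "2*a - lam - a^2*rho + 2*c*(lam-a) \<le> 0"
    and cfl: "rho * (2*a^2*lam*m + (lam+a)^2*(lam-a)) \<le> 2*lam^2*m"
  shows "\<bar>taho_kappa lam a rho 2 * d + taho_sigma lam a rho 2\<bar> \<le> (1 - c) * d"
proof -
  define alpha where "alpha = (lam - a^2*rho) / (2*(lam-a))"
  define beta where "beta = (lam+a)^2 / (4*lam) * rho"
  have "0 \<le> alpha" unfolding alpha_def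
    using relaxed_speed_below_lam[OF assms(1-4)] assms by (intro divide_nonneg_pos) auto
  moreover have "alpha \<le> 1 - c"
  proof -
    have "alpha - (1 - c) = (2*a - lam - a^2*rho + 2*c*(lam-a)) / (2*(lam-a))"
      unfolding alpha_def using assms by (simp add: field_simps)
    also have "\<dots> \<le> 0" using assms by (intro divide_nonpos_pos) auto
    finally show ?thesis by simp
  qed
  moreover have "beta \<le> alpha * m"
    unfolding alpha_def beta_def using assms by (intro drift_below_slope) (auto simp: mult.commute)
  moreover have "0 \<le> beta" unfolding beta_def using assms by simp
  ultimately have "\<bar>alpha * d - beta\<bar> \<le> (1 - c) * d"
    using assms by (intro abs_weighted_difference_le) auto
  moreover have "taho_kappa lam a rho 2 = - alpha" "taho_sigma lam a rho 2 = beta"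
    unfolding alpha_def beta_def taho_kappa_def taho_sigma_def
    by (simp_all, metis minus_diff_eq minus_divide_left)
  ultimately show ?thesis by (simp add: abs_minus_commute)
qed

(* Nonnegativity of the central slope (B_0^i)' = (1 - c) M_i' - |Gamma_i'|. *)
lemma central_slope_nonneg:
  fixes lam a rho dx d m1 m2 :: real
  assumes i: "i \<in> {1, 2}" and "0 < a" "a < lam" "0 < rho" "rho * lam \<le> 1"
    and "0 < m1" "0 < m2" "(if i = 1 then m1 else m2) \<le> d" "rho / 2 * dx \<le> 1/2"
    and "rho * (2*a^2*lam*m1 + (lam+a)*(lam-a)^2) \<le> 2*lam^2*m1"
    and "rho * (2*a^2*lam*m2 + (lam+a)^2*(lam-a)) \<le> 2*lam^2*m2"
    and "2*a - lam - a^2*rho + rho*dx*(lam - a) \<le> 0"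
  shows "0 \<le> d - \<bar>taho_kappa lam a rho i * d + taho_sigma lam a rho i\<bar> - rho / 2 * dx * d"
proof -
  have "\<bar>taho_kappa lam a rho i * d + taho_sigma lam a rho i\<bar> \<le> (1 - rho / 2 * dx) * d"
  proof (cases "i = 1")
    case True
    then show ?thesis using Gamma1_slope_bound assms by simp
  next
    case False
    then have "i = 2" using i by simp
    moreover have "2*a - lam - a^2*rho + 2*(rho / 2 * dx)*(lam - a) \<le> 0" using assms by simp
    ultimately show ?thesis using Gamma2_slope_bound[of a lam rho m2 d] assms by simp
  qed
  then show ?thesis by (simp add: algebra_simps)
qed

lemma stencil_side_slopes:
  fixes Bm B0 Bp Mi G :: "real \<Rightarrow> real" and c D g :: real
  assumes sum: "\<And>v. Bm v + B0 v + Bp v = Mi v * (1 - c)"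
    and diff: "\<And>v. Bp v - Bm v = G v"
    and dM: "(Mi has_real_derivative D) (at u)"
    and dG: "(G has_real_derivative g) (at u)"
    and dB0: "(B0 has_real_derivative D - \<bar>g\<bar> - c * D) (at u)"
  shows "(Bm has_real_derivative (\<bar>g\<bar> - g) / 2) (at u)"
    and "(Bp has_real_derivative (\<bar>g\<bar> + g) / 2) (at u)"
proof -
  have "Bm = (\<lambda>v. (Mi v * (1 - c) - B0 v - G v) / 2)"
    using sum diff by (auto simp: fun_eq_iff field_simps)
  then show "(Bm has_real_derivative (\<bar>g\<bar> - g) / 2) (at u)"
    by (auto intro!: derivative_eq_intros dM dG dB0 simp: field_simps)
  have "Bp = (\<lambda>v. (Mi v * (1 - c) - B0 v + G v) / 2)"
    using sum diff by (auto simp: fun_eq_iff field_simps)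
  then show "(Bp has_real_derivative (\<bar>g\<bar> + g) / 2) (at u)"
    by (auto intro!: derivative_eq_intros dM dG dB0 simp: field_simps)
qed

(* The slopes of the TAHO coefficients B_l^i at a point u: the central one is
   (1 - c) M_i' - |Gamma_i'|, and the outer ones, being the positive and
   negative parts of Gamma_i', are nonnegative. *)
lemma taho_coefficient_slopes:
  fixes B :: "int \<Rightarrow> real \<Rightarrow> real" and M :: "nat \<Rightarrow> real \<Rightarrow> real" and c :: real
  assumes i: "i \<in> {1, 2}" and dM: "M i differentiable (at u)"
    and sum: "\<And>v. B (-1) v + B 0 v + B 1 v = M i v * (1 - c)"
    and diff: "\<And>v. B 1 v - B (-1) v = taho_Gamma lam a rho M i v"
    and dB0: "(B 0 has_real_derivative
        (deriv (M i) u - \<bar>deriv (taho_Gamma lam a rho M i) u\<bar> - c * deriv (M i) u)) (at u)"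
  shows "deriv (B 0) u = deriv (M i) u
           - \<bar>taho_kappa lam a rho i * deriv (M i) u + taho_sigma lam a rho i\<bar> - c * deriv (M i) u"
    and "0 \<le> deriv (B (-1)) u" and "0 \<le> deriv (B 1) u"
proof -
  define g where "g = taho_kappa lam a rho i * deriv (M i) u + taho_sigma lam a rho i"
  have dM': "(M i has_real_derivative deriv (M i) u) (at u)"
    using dM by (simp add: DERIV_deriv_iff_real_differentiable)
  have dG: "(taho_Gamma lam a rho M i has_real_derivative g) (at u)"
    unfolding g_def by (rule taho_Gamma_has_derivative[where M = M, OF i dM'])
  then have dB0': "(B 0 has_real_derivative deriv (M i) u - \<bar>g\<bar> - c * deriv (M i) u) (at u)"
    using dB0 DERIV_imp_deriv by metis
  then show "deriv (B 0) u = deriv (M i) u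
           - \<bar>taho_kappa lam a rho i * deriv (M i) u + taho_sigma lam a rho i\<bar> - c * deriv (M i) u"
    unfolding g_def by (rule DERIV_imp_deriv)
  have "deriv (B (-1)) u = (\<bar>g\<bar> - g) / 2" and "deriv (B 1) u = (\<bar>g\<bar> + g) / 2"
    using stencil_side_slopes[OF sum diff dM' dG dB0'] by (simp_all add: DERIV_imp_deriv)
  then show "0 \<le> deriv (B (-1)) u" and "0 \<le> deriv (B 1) u"
    using abs_ge_self[of g] abs_ge_minus_self[of g] by simp_all
qed

theorem proposition4p1:
  fixes lam a dt dx rho m1 m2 :: real
    and F :: "real \<Rightarrow> real"
    and M :: "nat \<Rightarrow> real \<Rightarrow> real"
    and B :: "nat \<Rightarrow> int \<Rightarrow> real \<Rightarrow> real"
    and beta :: "nat \<Rightarrow> int \<Rightarrow> real"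
    and U :: "real set"
  assumes lam_pos: "lam > 0"
    and M_diff: "\<And>i u. i \<in> {1, 2} \<Longrightarrow> M i differentiable (at u)"
    and M_sum: "\<And>u. M 1 u + M 2 u = u"
    and F_def: "\<And>u. F u = lam * (M 2 u - M 1 u)"
    and F0: "F 0 = 0"
    and a_def: "(F has_real_derivative a) (at 0)"
    and a_pos: "a > 0"
    and lam_sup: "\<And>u. \<bar>deriv F u\<bar> \<le> lam"
    and m1_min: "m1 \<in> (\<lambda>u. deriv (M 1) u) ` U" "\<And>u. u \<in> U \<Longrightarrow> m1 \<le> deriv (M 1) u"
    and m2_min: "m2 \<in> (\<lambda>u. deriv (M 2) u) ` U" "\<And>u. u \<in> U \<Longrightarrow> m2 \<le> deriv (M 2) u"
    and m_pos: "m1 > 0" "m2 > 0"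
    and dt_pos: "dt > 0" and dx_pos: "dx > 0"
    and rho_def: "rho = dt / dx"
    and beta_sum: "\<And>i. i \<in> {1, 2} \<Longrightarrow> beta i (-1) + beta i 0 + beta i 1 = 1 - rho / 2 * dx"
    and B_sum: "\<And>i u. i \<in> {1, 2} \<Longrightarrow>
        B i (-1) u + B i 0 u + B i 1 u = M i u * (1 - rho / 2 * dx)"
    and beta_diff: "\<And>i. i \<in> {1, 2} \<Longrightarrow> beta i 1 - beta i (-1) = taho_gamma lam a rho i"
    and B_diff: "\<And>i u. i \<in> {1, 2} \<Longrightarrow> B i 1 u - B i (-1) u = taho_Gamma lam a rho M i u"
    and beta10: "beta 1 0 = 1 - taho_gamma lam a rho 1 - rho / 2 * dx"
    and beta20: "beta 2 0 = 1 + taho_gamma lam a rho 2 - rho / 2 * dx"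
    and B0_deriv: "\<And>i u. i \<in> {1, 2} \<Longrightarrow>
        (B i 0 has_real_derivative
           (deriv (M i) u - \<bar>deriv (taho_Gamma lam a rho M i) u\<bar> - rho / 2 * dx * deriv (M i) u)) (at u)"
    and dt_le: "dt \<le> min ((1 - lam * rho) / (1 + taho_gamma lam a rho 1))
                          ((1 - lam * rho) / (1 - taho_gamma lam a rho 2))"
    and regime:
      "(lam > 2 * a \<and>
          dx \<le> a^2 / (lam + a) \<and>
          rho \<le> min (1 / lam)
                 (min (2 * lam^2 * m1 / (2 * a^2 * lam * m1 + (lam + a) * (lam - a)^2))
                      (2 * lam^2 * m2 / (2 * a^2 * lam * m2 + (lam + a)^2 * (lam - a)))))
       \<or> (a < lam \<and> lam < 2 * a \<and>
          dx \<le> a^2 / (lam + a) \<and>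
          rho \<le> min (1 / lam)
                 (min (2 * lam^2 * m1 / (2 * a^2 * lam * m1 + (lam + a) * (lam - a)^2))
                      (2 * lam^2 * m2 / (2 * a^2 * lam * m2 + (lam + a)^2 * (lam - a)))) \<and>
          rho \<ge> \<bar>lam - 2 * a\<bar> / (a^2 - dx * (lam - a)))"
  shows "\<forall>i \<in> {1, 2}. \<forall>u \<in> U.
           (\<forall>l \<in> {-1, 0, 1}. deriv (B i l) u \<ge> 0) \<and>
           1 - rho * lam + dt * (deriv (B i 0) u - beta i 0) \<ge> 0 \<and>
           rho * (taho_lam lam i + lam) / 2 + dt * (deriv (B i (-1)) u - beta i (-1)) \<ge> 0 \<and>
           rho * (lam - taho_lam lam i) / 2 + dt * (deriv (B i 1) u - beta i 1) \<ge> 0"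
proof -
  have rho_pos: "0 < rho" using rho_def dt_pos dx_pos by simp
  have dt_eq: "dt = rho * dx" using rho_def dx_pos by simp
  note step = step_restrictions_consequences[OF lam_pos a_pos rho_pos dx_pos m_pos regime]
  have half: "rho / 2 * dx \<le> 1/2"
    using time_step_le_one[OF lam_pos a_pos rho_pos dt_pos dt_le] dt_eq by simp
  show ?thesis
  proof (intro ballI)
    fix i :: nat and u :: real
    assume i: "i \<in> {1, 2}" and u: "u \<in> U"
    have "(if i = 1 then m1 else m2) \<le> deriv (M i) u" using m1_min(2) m2_min(2) u i by auto
    note central = central_slope_nonneg[OF i a_pos step(1) rho_pos step(2) m_pos this half step(3-5)]
    note slopes = taho_coefficient_slopes[OF i M_diff[OF i] B_sum[OF i] B_diff[OF i] B0_deriv[OF i, of u]]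
    have "beta i 0 = (if i = 1 then 1 - taho_gamma lam a rho 1 else 1 + taho_gamma lam a rho 2)
                     - rho / 2 * dx" using i beta10 beta20 by auto
    note weights = relaxation_weights_bounded[OF i lam_pos a_pos step(1) rho_pos step(2) dx_pos
        step(7,6) dt_eq beta_sum[OF i] beta_diff[OF i] this dt_le]
    have slopes_nonneg: "\<forall>l \<in> {-1, 0, 1}. 0 \<le> deriv (B i l) u"
      using slopes central by auto
    then have "0 \<le> dt * deriv (B i (-1)) u" "0 \<le> dt * deriv (B i 0) u" "0 \<le> dt * deriv (B i 1) u"
      using dt_pos by simp_all
    then have "1 - rho * lam + dt * (deriv (B i 0) u - beta i 0) \<ge> 0 \<and>
           rho * (taho_lam lam i + lam) / 2 + dt * (deriv (B i (-1)) u - beta i (-1)) \<ge> 0 \<and>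
           rho * (lam - taho_lam lam i) / 2 + dt * (deriv (B i 1) u - beta i 1) \<ge> 0"
      using weights unfolding right_diff_distrib by linarith
    with slopes_nonneg show "(\<forall>l \<in> {-1, 0, 1}. deriv (B i l) u \<ge> 0) \<and>
           1 - rho * lam + dt * (deriv (B i 0) u - beta i 0) \<ge> 0 \<and>
           rho * (taho_lam lam i + lam) / 2 + dt * (deriv (B i (-1)) u - beta i (-1)) \<ge> 0 \<and>
           rho * (lam - taho_lam lam i) / 2 + dt * (deriv (B i 1) u - beta i 1) \<ge> 0"
      by simp
  qed
qed

end
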